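(* For $k\ge 2$ let $f_k(x)=\sum_{n\ge 0}|S_n(123,\,k(k-1)\cdots 21(k+1))|\,x^n$ (the $n=0$ term being $1$). Then $f_2(x)=\frac{1-x}{1-2x}$ and, for every $k\ge 3$, $$f_k(x)=\frac{1}{1-x\,f_{k-1}(x)}.$$ In particular $f_3(x)=\frac{1-2x}{1-3x+x^2}$, so $|S_n(123,3214)|$ is the sequence $1,1,2,5,13,34,89,\dots$ (defined by $\bar F_0=\bar F_1=1$, $\bar F_2=2$, $\bar F_n=3\bar F_{n-1}-\bar F_{n-2}$ for $n\ge 3$). *)

theory Defs
  imports "HOL-Computational_Algebra.Formal_Power_Series"
begin

definition perms :: "nat \<Rightarrow> nat list set" where
  "perms n = {xs. distinct xs \<and> set xs = {1..n}}"

definition contains :: "nat list \<Rightarrow> nat list \<Rightarrow> bool" where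
  "contains p q \<longleftrightarrow> (\<exists>idx. length idx = length q \<and> sorted_wrt (<) idx \<and>
      (\<forall>i<length idx. idx ! i < length p) \<and>
      (\<forall>i<length q. \<forall>j<length q. (p ! (idx ! i) < p ! (idx ! j) \<longleftrightarrow> q ! i < q ! j)))"

definition avoids :: "nat list \<Rightarrow> nat list \<Rightarrow> bool" where
  "avoids p q \<longleftrightarrow> \<not> contains p q"

definition patt :: "nat \<Rightarrow> nat list" where
  "patt k = rev [1..<k+1] @ [k+1]"

definition Sav :: "nat \<Rightarrow> nat \<Rightarrow> nat list set" where
  "Sav k n = {p \<in> perms n. avoids p [1,2,3] \<and> avoids p (patt k)}"

definition genf :: "nat \<Rightarrow> rat fps" where
  "genf k = Abs_fps (\<lambda>n. of_nat (card (Sav k n)))"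

fun Fbar :: "nat \<Rightarrow> nat" where
  "Fbar 0 = 1"
| "Fbar (Suc 0) = 1"
| "Fbar (Suc (Suc 0)) = 2"
| "Fbar (Suc (Suc (Suc n))) = 3 * Fbar (Suc (Suc n)) - Fbar (Suc n)"

end

theory Submission
  imports Defs
begin

text \<open>
  A 123-avoiding permutation p of [n] is determined by its word of suffix gaps
  g(t) = max(p(t), ..., p(n)) - (n - t + 1), the number of values below the maximum of the
  suffix p(t) ... p(n) that are missing from it. These words are exactly the Catalan words
  (g(1) = 0 and g(t + 1) <= g(t) + 1), and p contains k(k-1)...21(k+1) iff some entry has at
  least k smaller entries to its left, iff some letter of its word is at least k. So f(k)
  counts the Catalan words with letters below k, and cutting such a word at its first return
  to 0, w = 0 (u + 1) r, gives f(k) = 1 + x f(k-1) f(k).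
\<close>

section \<open>Catalan words of bounded height\<close>

fun rises_le_one :: "nat list \<Rightarrow> bool" where
  "rises_le_one (x # y # ys) \<longleftrightarrow> y \<le> x + 1 \<and> rises_le_one (y # ys)"
| "rises_le_one _ \<longleftrightarrow> True"

lemma rises_le_one_Cons:
  "rises_le_one (x # xs) \<longleftrightarrow> rises_le_one xs \<and> (xs \<noteq> [] \<longrightarrow> hd xs \<le> x + 1)"
  by (cases xs) auto

lemma rises_le_one_append:
  "rises_le_one (xs @ ys) \<longleftrightarrow>
     rises_le_one xs \<and> rises_le_one ys \<and> (xs \<noteq> [] \<and> ys \<noteq> [] \<longrightarrow> hd ys \<le> last xs + 1)"
  by (induction xs rule: rises_le_one.induct) (auto simp: rises_le_one_Cons)

lemma rises_le_one_map_Suc [simp]: "rises_le_one (map Suc xs) = rises_le_one xs"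
  by (induction xs rule: rises_le_one.induct) auto

definition catalan_words :: "nat \<Rightarrow> nat \<Rightarrow> nat list set" where
  "catalan_words k n =
     {w. length w = n \<and> set w \<subseteq> {..<k} \<and> rises_le_one w \<and> (w \<noteq> [] \<longrightarrow> hd w = 0)}"

lemma finite_catalan_words: "finite (catalan_words k n)"
  by (rule finite_subset[OF _ finite_lists_length_eq[of "{..<k}" n]])
     (auto simp: catalan_words_def)

lemma catalan_words_0 [simp]: "catalan_words k 0 = {[]}"
  by (auto simp: catalan_words_def)

lemma catalan_words_height_0 [simp]: "catalan_words 0 (Suc n) = {}"
  by (auto simp: catalan_words_def length_Suc_conv)

fun first_return_join :: "nat \<times> nat list \<times> nat list \<Rightarrow> nat list" where
  "first_return_join (_, u, r) = 0 # map Suc u @ r"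

lemma takeWhile_pos_map_Suc_append:
  "r = [] \<or> hd r = 0 \<Longrightarrow> takeWhile (\<lambda>x. 0 < x) (map Suc u @ r) = map Suc u"
  by (induction u) (cases r; auto)+

lemma first_return_decomposition:
  obtains u r where "w = map Suc u @ r" and "r = [] \<or> hd r = 0"
proof
  let ?u = "map (\<lambda>x. x - 1) (takeWhile (\<lambda>x. 0 < x) w)"
  show "w = map Suc ?u @ dropWhile (\<lambda>x. 0 < x) w"
    by (induction w) auto
  show "dropWhile (\<lambda>x. 0 < x) w = [] \<or> hd (dropWhile (\<lambda>x. 0 < x) w) = 0"
    by (metis hd_dropWhile gr0I)
qed

lemma rises_le_one_first_return:
  assumes "r = [] \<or> hd r = 0"
  shows "rises_le_one (0 # map Suc u @ r) \<longleftrightarrow>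
           rises_le_one u \<and> (u \<noteq> [] \<longrightarrow> hd u = 0) \<and> rises_le_one r"
  using assms
  by (simp only: append_Cons[symmetric] rises_le_one_append rises_le_one_Cons rises_le_one_map_Suc)
     (auto simp: hd_map)

lemma first_return_inject:
  assumes "r = [] \<or> hd r = 0" and "r' = [] \<or> hd r' = 0" and "map Suc u @ r = map Suc u' @ r'"
  shows "u = u' \<and> r = r'"
proof -
  have "map Suc u = map Suc u'"
    using assms takeWhile_pos_map_Suc_append by metis
  then show ?thesis
    using assms(3) by (simp add: inj_map_eq_map)
qed

lemma catalan_words_Suc_Suc:
  "catalan_words (Suc k) (Suc n) =
     first_return_join ` (SIGMA j:{..n}. catalan_words k j \<times> catalan_words (Suc k) (n - j))"
  (is "?W = first_return_join ` ?S")
proof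
  show "first_return_join ` ?S \<subseteq> ?W"
  proof (rule image_subsetI, clarify)
    fix j u r assume "j \<le> n" and u: "u \<in> catalan_words k j"
      and r: "r \<in> catalan_words (Suc k) (n - j)"
    then have "rises_le_one (0 # map Suc u @ r)"
      by (subst rises_le_one_first_return) (auto simp: catalan_words_def)
    then show "first_return_join (j, u, r) \<in> ?W"
      using \<open>j \<le> n\<close> u r by (auto simp: catalan_words_def)
  qed
  show "?W \<subseteq> first_return_join ` ?S"
  proof
    fix w assume w: "w \<in> ?W"
    then obtain t where wt: "w = 0 # t" and "length t = n"
      unfolding catalan_words_def by (cases w) auto
    obtain u r where t: "t = map Suc u @ r" and r: "r = [] \<or> hd r = 0"
      by (rule first_return_decomposition)
    have "rises_le_one u \<and> (u \<noteq> [] \<longrightarrow> hd u = 0) \<and> rises_le_one r"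
      using w unfolding wt t catalan_words_def by (simp add: rises_le_one_first_return[OF r])
    then have "(length u, u, r) \<in> ?S"
      using w r \<open>length t = n\<close> unfolding wt t catalan_words_def by auto
    then show "w \<in> first_return_join ` ?S" unfolding wt t by force
  qed
qed

lemma inj_on_first_return_join:
  "inj_on first_return_join (SIGMA j:{..n}. catalan_words k j \<times> catalan_words (Suc k) (n - j))"
proof (rule inj_onI, clarify)
  fix j u r j' u' r'
  assume "first_return_join (j, u, r) = first_return_join (j', u', r')"
    and "u \<in> catalan_words k j" "r \<in> catalan_words (Suc k) (n - j)"
    and "u' \<in> catalan_words k j'" "r' \<in> catalan_words (Suc k) (n - j')"
  then show "j = j' \<and> (u, r) = (u', r')"
    using first_return_inject[of r r' u u'] by (auto simp: catalan_words_def)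
qed

lemma card_catalan_words_Suc_Suc:
  "card (catalan_words (Suc k) (Suc n)) =
     (\<Sum>j\<le>n. card (catalan_words k j) * card (catalan_words (Suc k) (n - j)))"
  unfolding catalan_words_Suc_Suc card_image[OF inj_on_first_return_join]
  by (subst card_SigmaI) (auto simp: finite_catalan_words card_cartesian_product)

definition catalan_words_fps :: "nat \<Rightarrow> 'a :: comm_semiring_1 fps" where
  "catalan_words_fps k = Abs_fps (\<lambda>n. of_nat (card (catalan_words k n)))"

lemma catalan_words_fps_0: "catalan_words_fps 0 = 1"
proof (rule fps_ext)
  fix n show "fps_nth (catalan_words_fps 0) n = fps_nth 1 n"
    by (cases n) (simp_all add: catalan_words_fps_def)
qed

lemma catalan_words_fps_Suc:
  "catalan_words_fps (Suc k) = 1 + fps_X * catalan_words_fps k * catalan_words_fps (Suc k)"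
proof (rule fps_ext)
  fix n show "fps_nth (catalan_words_fps (Suc k)) n
      = fps_nth (1 + fps_X * catalan_words_fps k * catalan_words_fps (Suc k)) n"
  proof (cases n)
    case (Suc m)
    have "fps_nth (1 + fps_X * catalan_words_fps k * catalan_words_fps (Suc k)) n
        = fps_nth (catalan_words_fps k * catalan_words_fps (Suc k)) m"
      using Suc by (simp add: mult.assoc)
    also have "\<dots> = fps_nth (catalan_words_fps (Suc k)) n"
      using Suc by (simp add: catalan_words_fps_def fps_mult_nth atLeast0AtMost
          card_catalan_words_Suc_Suc)
    finally show ?thesis
      by (rule sym)
  qed (simp add: catalan_words_fps_def)
qed

lemma catalan_words_fps_Suc_inverse:
  "(catalan_words_fps (Suc k) :: 'a :: field fps) = inverse (1 - fps_X * catalan_words_fps k)"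
proof (rule fps_inverse_unique[symmetric])
  have "(1 - fps_X * catalan_words_fps k) * catalan_words_fps (Suc k)
      = catalan_words_fps (Suc k) - fps_X * catalan_words_fps k * (catalan_words_fps (Suc k) :: 'a fps)"
    by (simp add: left_diff_distrib)
  then show "(1 - fps_X * catalan_words_fps k) * catalan_words_fps (Suc k) = (1 :: 'a fps)"
    using catalan_words_fps_Suc[of k] by (metis add_diff_cancel_right')
qed

section \<open>123-avoiding permutations and their suffix gaps\<close>

lemma contains_123_iff:
  "contains p [1, 2, 3] \<longleftrightarrow>
     (\<exists>i j l. i < j \<and> j < l \<and> l < length p \<and> p ! i < p ! j \<and> p ! j < p ! l)"
proof
  assume "contains p [1, 2, 3]"
  then obtain idx where len: "length idx = length [1::nat, 2, 3]" and sorted: "sorted_wrt (<) idx"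
    and bound: "\<forall>i<length idx. idx ! i < length p"
    and order: "\<forall>i<length [1::nat, 2, 3]. \<forall>j<length [1::nat, 2, 3].
                  p ! (idx ! i) < p ! (idx ! j) \<longleftrightarrow> [1::nat, 2, 3] ! i < [1, 2, 3] ! j"
    unfolding contains_def by blast
  have "idx ! 0 < idx ! 1" "idx ! 1 < idx ! 2"
    using sorted_wrt_nth_less[OF sorted] len by auto
  moreover have "idx ! 2 < length p"
    using bound len by auto
  moreover have "p ! (idx ! 0) < p ! (idx ! 1)" "p ! (idx ! 1) < p ! (idx ! 2)"
    using order by auto
  ultimately show "\<exists>i j l. i < j \<and> j < l \<and> l < length p \<and> p ! i < p ! j \<and> p ! j < p ! l"
    by blast
next
  assume "\<exists>i j l. i < j \<and> j < l \<and> l < length p \<and> p ! i < p ! j \<and> p ! j < p ! l"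
  then obtain i j l where "i < j" "j < l" "l < length p" "p ! i < p ! j" "p ! j < p ! l"
    by blast
  then show "contains p [1, 2, 3]"
    unfolding contains_def
    by (intro exI[of _ "[i, j, l]"]) (auto simp: less_Suc_eq numeral_3_eq_3)
qed

lemma contains_123_iff_bounded:
  "contains p [1, 2, 3] \<longleftrightarrow>
     (\<exists>i<length p. \<exists>j<length p. \<exists>l<length p. i < j \<and> j < l \<and> p ! i < p ! j \<and> p ! j < p ! l)"
  unfolding contains_123_iff by (meson order.strict_trans)

definition ascent_bottoms :: "nat list \<Rightarrow> nat set" where
  "ascent_bottoms s = {b. \<exists>j<length s. \<exists>l<length s. j < l \<and> s ! j = b \<and> b < s ! l}"

lemma ascent_bottoms_Cons:
  "ascent_bottoms (y # s) = {b. b = y \<and> (\<exists>c\<in>set s. y < c)} \<union> ascent_bottoms s"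
  unfolding ascent_bottoms_def
  by (auto simp: Ex_less_Suc2 in_set_conv_nth) (use nth_mem in blast)

lemma contains_123_Cons:
  "contains (y # s) [1, 2, 3] \<longleftrightarrow>
     contains s [1, 2, 3] \<or> (\<exists>j<length s. \<exists>l<length s. j < l \<and> y < s ! j \<and> s ! j < s ! l)"
  unfolding contains_123_iff_bounded by (simp add: Ex_less_Suc2) blast

lemma avoids_123_Cons:
  "avoids (y # s) [1, 2, 3] \<longleftrightarrow> avoids s [1, 2, 3] \<and> (\<forall>b\<in>ascent_bottoms s. b \<le> y)"
proof -
  have "(\<exists>j<length s. \<exists>l<length s. j < l \<and> y < s ! j \<and> s ! j < s ! l)
      \<longleftrightarrow> (\<exists>b\<in>ascent_bottoms s. y < b)"
    unfolding ascent_bottoms_def by blast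
  then show ?thesis
    unfolding avoids_def contains_123_Cons by (auto simp: not_le)
qed

lemma length_patt [simp]: "length (patt k) = Suc k"
  by (simp add: patt_def)

lemma distinct_patt: "distinct (patt k)"
  by (simp add: patt_def)

lemma nth_patt: "a \<le> k \<Longrightarrow> patt k ! a = (if a < k then k - a else k + 1)"
  unfolding patt_def by (auto simp: nth_append rev_nth simp del: upt_Suc)

definition left_smaller :: "nat list \<Rightarrow> nat \<Rightarrow> nat" where
  "left_smaller p t = card {i. i < t \<and> p ! i < p ! t}"

lemma contains_patt_imp_left_smaller:
  assumes "contains p (patt k)"
  shows "\<exists>t<length p. k \<le> left_smaller p t"
proof -
  obtain idx where len: "length idx = Suc k" and sorted: "sorted_wrt (<) idx"
    and bound: "\<forall>i<Suc k. idx ! i < length p"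
    and order: "\<forall>i<Suc k. \<forall>j<Suc k. p ! (idx ! i) < p ! (idx ! j) \<longleftrightarrow> patt k ! i < patt k ! j"
    using assms unfolding contains_def by auto
  have "set (take k idx) \<subseteq> {i. i < idx ! k \<and> p ! i < p ! (idx ! k)}"
  proof
    fix i assume "i \<in> set (take k idx)"
    then obtain a where a: "a < k" "i = idx ! a"
      using len by (auto simp: in_set_conv_nth)
    then show "i \<in> {i. i < idx ! k \<and> p ! i < p ! (idx ! k)}"
      using sorted_wrt_nth_less[OF sorted, of a k] order len by (auto simp: nth_patt)
  qed
  then have "card (set (take k idx)) \<le> left_smaller p (idx ! k)"
    unfolding left_smaller_def by (intro card_mono) auto
  moreover have "card (set (take k idx)) = k"
    using sorted len by (simp add: distinct_card strict_sorted_iff)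
  ultimately show ?thesis
    using bound by auto
qed

lemma left_smaller_imp_contains_patt:
  assumes "distinct p" and "avoids p [1, 2, 3]" and "t < length p" and "k \<le> left_smaller p t"
  shows "contains p (patt k)"
proof -
  define S where "S = {i. i < t \<and> p ! i < p ! t}"
  define L where "L = take k (sorted_list_of_set S)"
  have "finite S" by (simp add: S_def)
  then have len: "length L = k" and sorted: "sorted_wrt (<) L" and L_in_S: "set L \<subseteq> S"
    using assms(4) sorted_list_of_set.strict_sorted_key_list_of_set[of S]
    by (auto simp: L_def left_smaller_def S_def[symmetric] sorted_wrt_take dest: in_set_takeD)
  have decreasing: "p ! j < p ! i" if "i \<in> S" "j \<in> S" "i < j" for i j
  proof -
    have "p ! i \<noteq> p ! j"
      using that assms(1,3) by (auto simp: S_def nth_eq_iff_index_eq)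
    moreover have "\<not> (p ! i < p ! j \<and> p ! j < p ! t)"
      using assms(2,3) that unfolding avoids_def contains_123_iff S_def by auto
    ultimately show ?thesis
      using that by (auto simp: S_def)
  qed
  define idx where "idx = L @ [t]"
  have idx_nth: "idx ! a = L ! a \<and> L ! a \<in> S" if "a < k" for a
    using that len L_in_S by (auto simp: idx_def nth_append)
  have idx_last: "idx ! k = t"
    using len by (simp add: idx_def nth_append)
  have monotone: "p ! (idx ! a) < p ! (idx ! b)"
    if "a \<le> k" "b \<le> k" "patt k ! a < patt k ! b" for a b
  proof (cases "b < k")
    case True
    then have "b < a" "a < k"
      using that by (auto simp: nth_patt split: if_splits)
    then show ?thesis
      using decreasing idx_nth True sorted_wrt_nth_less[OF sorted] len by auto
  next
    case False
    then show ?thesis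
      using that idx_nth idx_last by (auto simp: nth_patt S_def split: if_splits)
  qed
  show ?thesis
    unfolding contains_def
  proof (intro exI[of _ idx] conjI allI impI)
    show "length idx = length (patt k)" "sorted_wrt (<) idx"
      using len sorted L_in_S by (auto simp: idx_def sorted_wrt_append S_def)
    show "idx ! i < length p" if "i < length idx" for i
      using that idx_nth[of i] idx_last assms(3) len
      by (cases "i < k") (auto simp: S_def idx_def nth_append)
    show "p ! (idx ! i) < p ! (idx ! j) \<longleftrightarrow> patt k ! i < patt k ! j"
      if "i < length (patt k)" "j < length (patt k)" for i j
      \<comment> \<open>both sides are strict linear orders on distinct values, so \<open>monotone\<close> suffices\<close>
      using that monotone[of i j] monotone[of j i] distinct_patt[of k]
      by (metis length_patt less_Suc_eq_le linorder_neqE order_less_asym nth_eq_iff_index_eq)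
  qed
qed

fun suffix_gaps :: "nat list \<Rightarrow> nat list" where
  "suffix_gaps [] = []"
| "suffix_gaps (x # xs) = (Max (set (x # xs)) - length (x # xs)) # suffix_gaps xs"

lemma length_suffix_gaps [simp]: "length (suffix_gaps p) = length p"
  by (induction p) auto

lemma nth_suffix_gaps:
  "t < length p \<Longrightarrow> suffix_gaps p ! t = Max (set (drop t p)) - (length p - t)"
  by (induction p arbitrary: t) (auto simp: nth_Cons split: nat.split)

lemma rises_le_one_suffix_gaps: "rises_le_one (suffix_gaps p)"
proof (induction p rule: suffix_gaps.induct)
  case (2 x xs)
  show ?case
  proof (cases xs)
    case (Cons y ys)
    then show ?thesis
      using 2 by (simp add: max_def, arith)
  qed simp
qed simp

lemma suffix_max_position:
  assumes "t < length p"
  obtains l where "t \<le> l" "l < length p" "p ! l = Max (set (drop t p))"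
    and "\<And>i. t \<le> i \<Longrightarrow> i < length p \<Longrightarrow> p ! i \<le> p ! l"
proof -
  have "Max (set (drop t p)) \<in> set (drop t p)"
    using assms by (intro Max_in) auto
  then obtain j where "j < length p - t" "p ! (t + j) = Max (set (drop t p))"
    by (auto simp: in_set_conv_nth)
  moreover have "p ! i \<le> Max (set (drop t p))" if "t \<le> i" "i < length p" for i
    using that by (intro Max_ge) (auto simp: in_set_conv_nth intro!: exI[of _ "i - t"])
  ultimately show thesis
    by (intro that[of "t + j"]) auto
qed

lemma left_smaller_add_right_smaller:
  assumes "distinct p" and "set p = {1..n}" and "t < length p"
  shows "left_smaller p t + card {i. t < i \<and> i < length p \<and> p ! i < p ! t} = p ! t - 1"
proof -
  let ?L = "{i. i < t \<and> p ! i < p ! t}" and ?R = "{i. t < i \<and> i < length p \<and> p ! i < p ! t}"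
  have "?L \<union> ?R = {i. i < length p \<and> p ! i < p ! t}"
    using assms(3) by (auto simp: nat_neq_iff) (metis less_irrefl linorder_neqE_nat)
  moreover have "card {i. i < length p \<and> p ! i < p ! t} = card {1..<p ! t}"
  proof (rule bij_betw_same_card[of "nth p"])
    have "nth p ` {i. i < length p \<and> p ! i < p ! t} = {v \<in> set p. v < p ! t}"
      by (auto simp: in_set_conv_nth)
    also have "\<dots> = {1..<p ! t}"
      using assms(2,3) nth_mem[OF assms(3)] by auto
    finally show "bij_betw (nth p) {i. i < length p \<and> p ! i < p ! t} {1..<p ! t}"
      using assms(1) by (auto simp: bij_betw_def inj_on_nth)
  qed
  moreover have "card (?L \<union> ?R) = card ?L + card ?R"
    by (rule card_Un_disjoint) (auto intro: finite_subset[of _ "{..<length p}"])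
  ultimately show ?thesis
    by (simp add: left_smaller_def)
qed

lemma left_smaller_le_suffix_gaps:
  assumes "distinct p" and "set p = {1..n}" and "avoids p [1, 2, 3]" and "t < length p"
  shows "left_smaller p t \<le> suffix_gaps p ! t"
proof -
  obtain l where l: "t \<le> l" "l < length p" "p ! l = Max (set (drop t p))"
    and max: "\<And>i. t \<le> i \<Longrightarrow> i < length p \<Longrightarrow> p ! i \<le> p ! l"
    using suffix_max_position[OF assms(4)] by blast
  show ?thesis
  proof (cases "l = t")
    case True
    have "p ! i < p ! t" if "t < i" "i < length p" for i
      using max[of i] that True assms(1) l by (auto simp: nth_eq_iff_index_eq order.order_iff_strict)
    then have "{i. t < i \<and> i < length p \<and> p ! i < p ! t} = {t<..<length p}"
      by auto
    then show ?thesis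
      using left_smaller_add_right_smaller[OF assms(1,2,4)] nth_suffix_gaps[OF assms(4)] l True
      by simp
  next
    case False
    have "p ! t \<noteq> p ! l"
      using False l(2) assms(4) nth_eq_iff_index_eq[OF assms(1)] by metis
    then have "p ! t < p ! l"
      using max[of t] l by simp
    moreover have "t < l"
      using False l(1) by simp
    ultimately have "{i. i < t \<and> p ! i < p ! t} = {}"
      using assms(3) l(2) unfolding avoids_def contains_123_iff by blast
    then show ?thesis
      unfolding left_smaller_def by (metis card.empty zero_le)
  qed
qed

lemma suffix_gaps_le_left_smaller:
  assumes "distinct p" and "set p = {1..n}" and "t < length p"
  shows "\<exists>l<length p. suffix_gaps p ! t \<le> left_smaller p l"
proof -
  obtain l where l: "t \<le> l" "l < length p" "p ! l = Max (set (drop t p))"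
    using suffix_max_position[OF assms(3)] by blast
  have "card {i. l < i \<and> i < length p \<and> p ! i < p ! l} \<le> card {l<..<length p}"
    by (intro card_mono) auto
  then have "suffix_gaps p ! t \<le> left_smaller p l"
    using left_smaller_add_right_smaller[OF assms(1,2) l(2)] nth_suffix_gaps[OF assms(3)] l
    by simp
  then show ?thesis
    using l(2) by blast
qed

lemma avoids_patt_iff_suffix_gaps_less:
  assumes "distinct p" and "set p = {1..n}" and "avoids p [1, 2, 3]"
  shows "avoids p (patt k) \<longleftrightarrow> (\<forall>g\<in>set (suffix_gaps p). g < k)"
proof
  assume "avoids p (patt k)"
  then have "left_smaller p l < k" if "l < length p" for l
    using left_smaller_imp_contains_patt[OF assms(1,3) that, where k = k]
    unfolding avoids_def by (meson not_le)
  then show "\<forall>g\<in>set (suffix_gaps p). g < k"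
    using suffix_gaps_le_left_smaller[OF assms(1,2)]
    by (auto simp: in_set_conv_nth) (meson le_less_trans)
next
  assume "\<forall>g\<in>set (suffix_gaps p). g < k"
  then have "left_smaller p t < k" if "t < length p" for t
    using left_smaller_le_suffix_gaps[OF assms that] that
    by (metis le_less_trans length_suffix_gaps nth_mem)
  then show "avoids p (patt k)"
    using contains_patt_imp_left_smaller[of p k] unfolding avoids_def by (meson not_le)
qed

section \<open>Reconstruction from the suffix gaps\<close>

text \<open>
  Read from the right, the gap word fixes the suffix maximum x. If x is new, it is the next
  entry; otherwise 123-avoidance forces the next entry to be the smallest value not yet used.
\<close>

definition next_entry :: "nat \<Rightarrow> nat \<Rightarrow> nat list \<Rightarrow> nat" where
  "next_entry n x s = (if x \<in> set s then Min ({1..n} - set s) else x)"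

fun perm_of_gaps :: "nat \<Rightarrow> nat list \<Rightarrow> nat list" where
  "perm_of_gaps n [] = []"
| "perm_of_gaps n (g # gs) =
     next_entry n (g + length gs + 1) (perm_of_gaps n gs) # perm_of_gaps n gs"

lemma length_perm_of_gaps [simp]: "length (perm_of_gaps n gs) = length gs"
  by (induction gs) auto

lemma length_le_Max:
  assumes "distinct s" and "set s \<subseteq> {1..n}" and "s \<noteq> []"
  shows "length s \<le> Max (set s)"
proof -
  have "set s \<subseteq> {1..Max (set s)}"
    using assms(2) by (auto simp: Suc_le_eq)
  then show ?thesis
    using card_mono[of "{1..Max (set s)}" "set s"] distinct_card[OF assms(1)] by simp
qed

lemma perm_of_gaps_suffix_gaps:
  assumes "distinct (pre @ s)" and "set (pre @ s) = {1..n}" and "avoids (pre @ s) [1, 2, 3]"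
  shows "perm_of_gaps n (suffix_gaps s) = s"
  using assms
proof (induction s arbitrary: pre)
  case (Cons y s)
  define M where "M = Max (set (y # s))"
  have IH: "perm_of_gaps n (suffix_gaps s) = s"
    using Cons.IH[of "pre @ [y]"] Cons.prems by simp
  have "set (y # s) \<subseteq> {1..n}"
    using Cons.prems(2) by (metis Un_upper2 set_append)
  then have "length (y # s) \<le> M"
    unfolding M_def using Cons.prems(1) by (intro length_le_Max) auto
  then have "perm_of_gaps n (suffix_gaps (y # s)) = next_entry n M s # s"
    using IH by (simp add: M_def)
  also have "next_entry n M s = y"
  proof (cases "M \<in> set s")
    case True
    have "y \<noteq> M"
      using True Cons.prems(1) by auto
    then have "y < M"
      unfolding M_def by (metis List.finite_set Max_ge le_neq_implies_less list.set_intros(1))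
    have missing: "{1..n} - set s = insert y (set pre)"
      using Cons.prems(1,2) by auto
    have "y \<le> v" if "v \<in> set pre" for v
    proof (rule ccontr)
      assume "\<not> y \<le> v"
      obtain i where "i < length pre" "pre ! i = v"
        using \<open>v \<in> set pre\<close> by (auto simp: in_set_conv_nth)
      moreover obtain j where "j < length s" "s ! j = M"
        using True by (auto simp: in_set_conv_nth)
      ultimately have "contains (pre @ y # s) [1, 2, 3]"
        unfolding contains_123_iff using \<open>\<not> y \<le> v\<close> \<open>y < M\<close>
        by (intro exI[of _ i] exI[of _ "length pre"] exI[of _ "length pre + Suc j"])
           (auto simp: nth_append)
      then show False
        using Cons.prems(3) by (simp add: avoids_def)
    qed
    then have "Min ({1..n} - set s) = y"
      unfolding missing by (intro Min_eqI) auto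
    then show ?thesis
      using True by (simp add: next_entry_def)
  next
    case False
    then show ?thesis
      using Max_in[of "set (y # s)"] by (auto simp: next_entry_def M_def)
  qed
  finally show ?case .
qed simp

text \<open>
  The last conjunct is the invariant that keeps the greedy choice of \<open>next_entry\<close> from
  creating a 123 with two entries of the suffix.
\<close>

definition admissible_suffix :: "nat \<Rightarrow> nat list \<Rightarrow> bool" where
  "admissible_suffix n s \<longleftrightarrow> distinct s \<and> set s \<subseteq> {1..n} \<and> avoids s [1, 2, 3] \<and>
     (\<forall>b\<in>ascent_bottoms s. \<forall>v\<in>{1..n} - set s. b < v)"

lemma admissible_suffix_Nil: "admissible_suffix n []"
  unfolding admissible_suffix_def avoids_def contains_123_iff ascent_bottoms_def by simp

lemma admissible_suffix_next_entry:
  assumes adm: "admissible_suffix n s" and "x \<le> n" and "length s < x" and "\<forall>v\<in>set s. v \<le> x"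
  shows "admissible_suffix n (next_entry n x s # s)" and "Max (set (next_entry n x s # s)) = x"
proof -
  have s: "distinct s" "set s \<subseteq> {1..n}" "avoids s [1, 2, 3]"
    and bottoms: "\<And>b v. b \<in> ascent_bottoms s \<Longrightarrow> v \<in> {1..n} - set s \<Longrightarrow> b < v"
    using adm by (auto simp: admissible_suffix_def)
  define y where "y = next_entry n x s"
  have y: "y \<in> {1..n} - set s" "y \<le> x" "x \<in> set (y # s)"
    and y_min: "x \<in> set s \<Longrightarrow> w \<in> {1..n} - set s \<Longrightarrow> y \<le> w" for w
  proof -
    show "x \<in> set s \<Longrightarrow> w \<in> {1..n} - set s \<Longrightarrow> y \<le> w"
      by (simp add: y_def next_entry_def)
    have "\<not> {1..x} \<subseteq> set s"
      using card_mono[of "set s" "{1..x}"] distinct_card[OF s(1)] assms(3) by auto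
    then obtain v where v: "v \<in> {1..x} - set s"
      by blast
    then have "v \<in> {1..n} - set s"
      using assms(2) by auto
    then have "Min ({1..n} - set s) \<in> {1..n} - set s" "Min ({1..n} - set s) \<le> v"
      by (metis Min_in empty_iff finite_Diff finite_atLeastAtMost, simp)
    then show "y \<in> {1..n} - set s" "y \<le> x" "x \<in> set (y # s)"
      using v assms(2,3) unfolding y_def next_entry_def by auto
  qed
  have "avoids (y # s) [1, 2, 3]"
    unfolding avoids_123_Cons using s(3) bottoms[OF _ y(1)] by (auto intro: less_imp_le)
  moreover have "b < w" if "b \<in> ascent_bottoms (y # s)" and "w \<in> {1..n} - set (y # s)" for b w
  proof (cases "b \<in> ascent_bottoms s")
    case False
    moreover have "x \<notin> set s \<Longrightarrow> y = x"
      by (simp add: y_def next_entry_def)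
    ultimately have "b = y \<and> x \<in> set s"
      using that(1) assms(4) by (cases "x \<in> set s") (auto simp: ascent_bottoms_Cons)
    then show ?thesis
      using y_min[of w] that(2) by (auto simp: order.order_iff_strict)
  qed (use bottoms that in auto)
  ultimately show "admissible_suffix n (y # s)"
    using s y by (auto simp: admissible_suffix_def)
  show "Max (set (y # s)) = x"
    using y assms(4) by (intro Max_eqI) auto
qed

lemma suffix_gaps_perm_of_gaps:
  assumes "rises_le_one gs" and "gs \<noteq> [] \<Longrightarrow> hd gs + length gs \<le> n"
  shows "admissible_suffix n (perm_of_gaps n gs) \<and> suffix_gaps (perm_of_gaps n gs) = gs \<and>
    (gs \<noteq> [] \<longrightarrow> Max (set (perm_of_gaps n gs)) = hd gs + length gs)"
  using assms
proof (induction gs)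
  case (Cons g gs)
  define s where "s = perm_of_gaps n gs"
  define x where "x = g + length gs + 1"
  have rises: "rises_le_one gs" "gs \<noteq> [] \<Longrightarrow> hd gs \<le> g + 1"
    using Cons.prems(1) by (auto simp: rises_le_one_Cons)
  moreover have "gs \<noteq> [] \<Longrightarrow> hd gs + length gs \<le> n"
    using rises(2) Cons.prems(2) by fastforce
  ultimately have IH: "admissible_suffix n s" "suffix_gaps s = gs"
    "gs \<noteq> [] \<Longrightarrow> Max (set s) = hd gs + length gs"
    using Cons.IH by (auto simp: s_def)
  have "v \<le> x" if "v \<in> set s" for v
  proof -
    have "gs \<noteq> []"
      using that by (auto simp: s_def)
    then show ?thesis
      using that IH(3) rises(2) Max_ge[of "set s" v] by (simp add: x_def)
  qed
  then have "admissible_suffix n (next_entry n x s # s)"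
    and max: "Max (set (next_entry n x s # s)) = x"
    using admissible_suffix_next_entry[OF IH(1)] Cons.prems(2) by (auto simp: x_def s_def)
  moreover have "suffix_gaps (next_entry n x s # s) = g # gs"
    by (simp only: suffix_gaps.simps max IH(2)) (simp add: x_def s_def)
  ultimately show ?case
    by (simp add: x_def s_def)
qed (simp add: admissible_suffix_Nil)

lemma length_perm: "distinct p \<Longrightarrow> set p = {1..n} \<Longrightarrow> length p = n"
  using distinct_card by fastforce

lemma suffix_gaps_in_catalan_words:
  assumes "p \<in> Sav k n"
  shows "suffix_gaps p \<in> catalan_words k n"
proof -
  have p: "distinct p" "set p = {1..n}" "avoids p [1, 2, 3]" "avoids p (patt k)"
    using assms by (auto simp: Sav_def perms_def)
  have "hd (suffix_gaps p) = 0" if "suffix_gaps p \<noteq> []"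
    using that p(2) length_perm[OF p(1,2)] by (cases p) auto
  then show ?thesis
    using p length_perm[OF p(1,2)] avoids_patt_iff_suffix_gaps_less[OF p(1-3)]
    by (auto simp: catalan_words_def rises_le_one_suffix_gaps)
qed

lemma perm_of_gaps_in_Sav:
  assumes "g \<in> catalan_words k n"
  shows "perm_of_gaps n g \<in> Sav k n"
proof -
  have "rises_le_one g" "g \<noteq> [] \<Longrightarrow> hd g + length g \<le> n"
    using assms by (auto simp: catalan_words_def)
  then have "admissible_suffix n (perm_of_gaps n g)" and gaps: "suffix_gaps (perm_of_gaps n g) = g"
    using suffix_gaps_perm_of_gaps by blast+
  then have p: "distinct (perm_of_gaps n g)" "set (perm_of_gaps n g) \<subseteq> {1..n}"
    "avoids (perm_of_gaps n g) [1, 2, 3]"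
    by (auto simp: admissible_suffix_def)
  moreover have "set (perm_of_gaps n g) = {1..n}"
    using p assms card_subset_eq[OF _ p(2)] distinct_card[OF p(1)] by (simp add: catalan_words_def)
  moreover have "avoids (perm_of_gaps n g) (patt k)"
    using avoids_patt_iff_suffix_gaps_less[OF p(1) _ p(3)] calculation(4) gaps assms
    by (auto simp: catalan_words_def)
  ultimately show ?thesis
    by (simp add: Sav_def perms_def)
qed

lemma card_Sav_eq_card_catalan_words: "card (Sav k n) = card (catalan_words k n)"
proof (rule bij_betw_same_card[OF bij_betw_byWitness[where f' = "perm_of_gaps n"]])
  show "\<forall>p\<in>Sav k n. perm_of_gaps n (suffix_gaps p) = p"
    using perm_of_gaps_suffix_gaps[of "[]"] by (auto simp: Sav_def perms_def)
  show "\<forall>g\<in>catalan_words k n. suffix_gaps (perm_of_gaps n g) = g"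
    using suffix_gaps_perm_of_gaps by (auto simp: catalan_words_def)
  show "suffix_gaps ` Sav k n \<subseteq> catalan_words k n"
    using suffix_gaps_in_catalan_words by blast
  show "perm_of_gaps n ` catalan_words k n \<subseteq> Sav k n"
    using perm_of_gaps_in_Sav by blast
qed

section \<open>Generating functions\<close>

lemma genf_eq_catalan_words_fps: "genf k = catalan_words_fps k"
  by (simp add: genf_def catalan_words_fps_def card_Sav_eq_card_catalan_words)

lemma genf_Suc: "genf (Suc k) = inverse (1 - fps_X * genf k)"
  by (simp add: genf_eq_catalan_words_fps catalan_words_fps_Suc_inverse)

lemma fps_inverse_one_minus_X_mult_fraction:
  fixes a b :: "'a :: field fps"
  assumes "fps_nth b 0 \<noteq> 0"
  shows "inverse (1 - fps_X * (a * inverse b)) = b * inverse (b - fps_X * a)"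
proof -
  have "(b - fps_X * a) * inverse b = b * inverse b - fps_X * (a * inverse b)"
    by (simp add: algebra_simps)
  also have "\<dots> = 1 - fps_X * (a * inverse b)"
    using inverse_mult_eq_1'[OF assms] by simp
  finally have "1 - fps_X * (a * inverse b) = (b - fps_X * a) * inverse b" ..
  then show ?thesis
    using assms by (simp add: fps_inverse_mult fps_inverse_idempotent)
qed

lemma genf_0: "genf 0 = 1"
  by (simp add: genf_eq_catalan_words_fps catalan_words_fps_0)

lemma genf_2: "genf 2 = (1 - fps_X) * inverse (1 - 2 * fps_X)"
proof -
  have "genf 2 = inverse (1 - fps_X * (1 * inverse (1 - fps_X)))"
    using genf_Suc[of 1] genf_Suc[of 0] genf_0 by (simp add: numeral_2_eq_2)
  also have "\<dots> = (1 - fps_X) * inverse (1 - fps_X - fps_X * 1)"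
    by (rule fps_inverse_one_minus_X_mult_fraction) simp
  finally show ?thesis
    by (simp add: algebra_simps mult_2)
qed

lemma genf_3: "genf 3 = (1 - 2 * fps_X) * inverse (1 - 3 * fps_X + fps_X ^ 2)"
proof -
  have "genf 3 = inverse (1 - fps_X * ((1 - fps_X) * inverse (1 - 2 * fps_X)))"
    using genf_Suc[of 2] genf_2 by (simp add: numeral_3_eq_3 numeral_2_eq_2)
  also have "\<dots> = (1 - 2 * fps_X) * inverse (1 - 2 * fps_X - fps_X * (1 - fps_X))"
    by (rule fps_inverse_one_minus_X_mult_fraction) (simp add: fps_numeral_fps_const)
  finally show ?thesis
    by (simp add: algebra_simps power2_eq_square)
qed

lemma card_Sav_3_recurrence:
  "card (Sav 3 (n + 2)) + card (Sav 3 n) = 3 * card (Sav 3 (n + 1))"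
proof -
  let ?Q = "1 - 3 * fps_X + fps_X ^ 2 :: rat fps"
  have "genf 3 * ?Q = (1 - 2 * fps_X) * (?Q * inverse ?Q)"
    by (simp add: genf_3 algebra_simps)
  also have "\<dots> = 1 - 2 * fps_X"
    by (subst inverse_mult_eq_1') (simp_all add: fps_numeral_fps_const)
  finally have "fps_nth (genf 3 * ?Q) (n + 2) = 0"
    by (simp add: fps_numeral_fps_const)
  moreover have "genf 3 * ?Q = genf 3 - fps_const 3 * (fps_X * genf 3) + fps_X ^ 2 * genf 3"
    by (simp add: algebra_simps fps_numeral_fps_const)
  ultimately have "(of_nat (card (Sav 3 (n + 2))) :: rat) - 3 * of_nat (card (Sav 3 (n + 1)))
      + of_nat (card (Sav 3 n)) = 0"
    by (simp add: fps_X_power_mult_nth genf_def)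
  then have "(of_nat (card (Sav 3 (n + 2)) + card (Sav 3 n)) :: rat)
      = of_nat (3 * card (Sav 3 (n + 1)))"
    by simp
  then show ?thesis
    by (simp only: of_nat_eq_iff)
qed

lemma card_Sav_3_eq_Fbar: "card (Sav 3 n) = Fbar n"
proof -
  have one: "card (catalan_words 3 (Suc 0)) = 1"
    unfolding numeral_3_eq_3 card_catalan_words_Suc_Suc by simp
  show ?thesis
  proof (induction n rule: Fbar.induct)
    case 3
    show ?case
      using card_Sav_3_recurrence[of 0] by (simp add: card_Sav_eq_card_catalan_words one)
  next
    case (4 n)
    then show ?case
      using card_Sav_3_recurrence[of "Suc n"] by simp
  qed (simp_all add: card_Sav_eq_card_catalan_words one)
qed

theorem mainTheorem3:
  shows "genf 2 = (1 - fps_X) * inverse (1 - 2 * fps_X)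
    \<and> (\<forall>k\<ge>3. genf k = inverse (1 - fps_X * genf (k - 1)))
    \<and> genf 3 = (1 - 2 * fps_X) * inverse (1 - 3 * fps_X + fps_X ^ 2)
    \<and> (\<forall>n. card (Sav 3 n) = Fbar n)"
proof (intro conjI allI impI)
  fix k :: nat
  assume "3 \<le> k"
  then show "genf k = inverse (1 - fps_X * genf (k - 1))"
    using genf_Suc[of "k - 1"] by simp
qed (simp_all add: genf_2 genf_3 card_Sav_3_eq_Fbar)

end
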